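(* Let $U$ be a commutative supertropical monoid, $M:=eU$, $\gamma:M\to N$ a surjective homomorphism onto a bipotent semiring $N$, and $\alpha:U\to V$ a transmission covering $\gamma$. Then $\alpha$ is an h-transmission if and only if the ghost kernel $\mathfrak A_\alpha$ contains the set $\Sigma_0(U,\gamma):=\{x\in\mathcal T(U):\exists x_1\in M,\ x_1<ex,\ \gamma(x_1)=\gamma(ex)\neq0\}$.
   Context: All monoids are commutative. A supertropical monoid is a monoid $(U,\cdot)$ with absorbing element $0$ and distinguished idempotent $e$ with $ex=0\Rightarrow x=0$, together with a total ordering on $M:=eU$, compatible with multiplication and with $0$ least, making $M$ a bipotent semiring (addition $=\max$). $\mathcal T(U):=U\setminus eU$. A transmission $\alpha:U\to V$ is a map with $\alpha(0)=0$, $\alpha(1)=1$, multiplicative, $\alpha(e_U)=e_V$, order-preserving on $eU$; it covers $\gamma$ if its restriction $eU\to eV$ equals $\gamma$ (so $eV=N$). Ghost kernel: $\mathfrak A_\alpha:=\{x\in U:\alpha(x)\in eV\}$. An h-transmission is a transmission such that for all $x,y\in U$: if $ex<ey$ and $\alpha(ex)=\alpha(ey)$, then $\alpha(y)\in eV$. *)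

theory Defs
  imports Main
begin

text \<open>A (commutative) supertropical monoid, given by an explicit carrier.
  The field ghost is the distinguished idempotent e; le is the total ordering
  on the ghost ideal M = eU.\<close>

record 'a stmonoid =
  carrier :: "'a set"
  mult :: "'a \<Rightarrow> 'a \<Rightarrow> 'a"
  one :: "'a"
  zero :: "'a"
  ghost :: "'a"
  le :: "'a \<Rightarrow> 'a \<Rightarrow> bool"

definition ghosts :: "('a, 'b) stmonoid_scheme \<Rightarrow> 'a set" where
  "ghosts U = mult U (ghost U) ` carrier U"

definition lt :: "('a, 'b) stmonoid_scheme \<Rightarrow> 'a \<Rightarrow> 'a \<Rightarrow> bool" where
  "lt U x y \<longleftrightarrow> le U x y \<and> x \<noteq> y"

definition gadd :: "('a, 'b) stmonoid_scheme \<Rightarrow> 'a \<Rightarrow> 'a \<Rightarrow> 'a" where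
  "gadd U x y = (if le U x y then y else x)"

definition supertropical_monoid :: "('a, 'b) stmonoid_scheme \<Rightarrow> bool" where
  "supertropical_monoid U \<longleftrightarrow>
     (\<forall>x\<in>carrier U. \<forall>y\<in>carrier U. mult U x y \<in> carrier U) \<and>
     (\<forall>x\<in>carrier U. \<forall>y\<in>carrier U. \<forall>z\<in>carrier U.
         mult U (mult U x y) z = mult U x (mult U y z)) \<and>
     (\<forall>x\<in>carrier U. \<forall>y\<in>carrier U. mult U x y = mult U y x) \<and>
     one U \<in> carrier U \<and> (\<forall>x\<in>carrier U. mult U (one U) x = x) \<and>
     zero U \<in> carrier U \<and> (\<forall>x\<in>carrier U. mult U (zero U) x = zero U) \<and>
     ghost U \<in> carrier U \<and> mult U (ghost U) (ghost U) = ghost U \<and>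
     (\<forall>x\<in>carrier U. mult U (ghost U) x = zero U \<longrightarrow> x = zero U) \<and>
     \<comment> \<open>total ordering on M = eU\<close>
     (\<forall>x\<in>ghosts U. le U x x) \<and>
     (\<forall>x\<in>ghosts U. \<forall>y\<in>ghosts U. le U x y \<and> le U y x \<longrightarrow> x = y) \<and>
     (\<forall>x\<in>ghosts U. \<forall>y\<in>ghosts U. \<forall>z\<in>ghosts U. le U x y \<and> le U y z \<longrightarrow> le U x z) \<and>
     (\<forall>x\<in>ghosts U. \<forall>y\<in>ghosts U. le U x y \<or> le U y x) \<and>
     \<comment> \<open>compatible with multiplication (so M is a bipotent semiring with addition max)\<close>
     (\<forall>x\<in>ghosts U. \<forall>y\<in>ghosts U. \<forall>z\<in>ghosts U. le U x y \<longrightarrow> le U (mult U x z) (mult U y z)) \<and>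
     \<comment> \<open>0 is the least element\<close>
     (\<forall>x\<in>ghosts U. le U (zero U) x)"

definition tangibles :: "('a, 'b) stmonoid_scheme \<Rightarrow> 'a set" where
  "tangibles U = carrier U - ghosts U"

text \<open>Semiring homomorphism of bipotent semirings eU \<rightarrow> eV (the unit of eU is e).\<close>
definition ghost_semiring_hom ::
  "('a, 'c) stmonoid_scheme \<Rightarrow> ('b, 'd) stmonoid_scheme \<Rightarrow> ('a \<Rightarrow> 'b) \<Rightarrow> bool" where
  "ghost_semiring_hom U V g \<longleftrightarrow>
     (\<forall>x\<in>ghosts U. g x \<in> ghosts V) \<and>
     g (zero U) = zero V \<and> g (ghost U) = ghost V \<and>
     (\<forall>x\<in>ghosts U. \<forall>y\<in>ghosts U. g (mult U x y) = mult V (g x) (g y)) \<and>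
     (\<forall>x\<in>ghosts U. \<forall>y\<in>ghosts U. g (gadd U x y) = gadd V (g x) (g y))"

definition transmission ::
  "('a, 'c) stmonoid_scheme \<Rightarrow> ('b, 'd) stmonoid_scheme \<Rightarrow> ('a \<Rightarrow> 'b) \<Rightarrow> bool" where
  "transmission U V \<alpha> \<longleftrightarrow>
     (\<forall>x\<in>carrier U. \<alpha> x \<in> carrier V) \<and>
     \<alpha> (zero U) = zero V \<and> \<alpha> (one U) = one V \<and>
     (\<forall>x\<in>carrier U. \<forall>y\<in>carrier U. \<alpha> (mult U x y) = mult V (\<alpha> x) (\<alpha> y)) \<and>
     \<alpha> (ghost U) = ghost V \<and>
     (\<forall>x\<in>ghosts U. \<forall>y\<in>ghosts U. le U x y \<longrightarrow> le V (\<alpha> x) (\<alpha> y))"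

text \<open>\<alpha> covers \<gamma> : eU \<rightarrow> eV (so N = eV).\<close>
definition covers ::
  "('a, 'c) stmonoid_scheme \<Rightarrow> ('a \<Rightarrow> 'b) \<Rightarrow> ('a \<Rightarrow> 'b) \<Rightarrow> bool" where
  "covers U \<alpha> \<gamma> \<longleftrightarrow> (\<forall>x\<in>ghosts U. \<alpha> x = \<gamma> x)"

definition ghost_kernel ::
  "('a, 'c) stmonoid_scheme \<Rightarrow> ('b, 'd) stmonoid_scheme \<Rightarrow> ('a \<Rightarrow> 'b) \<Rightarrow> 'a set" where
  "ghost_kernel U V \<alpha> = {x\<in>carrier U. \<alpha> x \<in> ghosts V}"

definition h_transmission ::
  "('a, 'c) stmonoid_scheme \<Rightarrow> ('b, 'd) stmonoid_scheme \<Rightarrow> ('a \<Rightarrow> 'b) \<Rightarrow> bool" where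
  "h_transmission U V \<alpha> \<longleftrightarrow> transmission U V \<alpha> \<and>
     (\<forall>x\<in>carrier U. \<forall>y\<in>carrier U.
        lt U (mult U (ghost U) x) (mult U (ghost U) y) \<and>
        \<alpha> (mult U (ghost U) x) = \<alpha> (mult U (ghost U) y) \<longrightarrow> \<alpha> y \<in> ghosts V)"

definition Sigma0 ::
  "('a, 'c) stmonoid_scheme \<Rightarrow> ('b, 'd) stmonoid_scheme \<Rightarrow> ('a \<Rightarrow> 'b) \<Rightarrow> 'a set" where
  "Sigma0 U N \<gamma> = {x\<in>tangibles U. \<exists>x1\<in>ghosts U. lt U x1 (mult U (ghost U) x) \<and>
       \<gamma> x1 = \<gamma> (mult U (ghost U) x) \<and> \<gamma> (mult U (ghost U) x) \<noteq> zero N}"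

end

theory Submission
  imports Defs
begin

text \<open>If \<open>ex < ey\<close> and \<open>\<alpha>(ex) = \<alpha>(ey)\<close>, then \<open>x\<^sub>1 = ex\<close> witnesses \<open>y \<in> \<Sigma>\<^sub>0\<close> unless \<open>y\<close> is a ghost
  or \<open>\<gamma>(ey) = 0\<close>; in these exceptional cases \<open>\<alpha>(y)\<close> is a ghost anyway (in the latter because
  \<open>e\<alpha>(y) = 0\<close> forces \<open>\<alpha>(y) = 0\<close>). Conversely, a witness \<open>x\<^sub>1\<close> for \<open>x \<in> \<Sigma>\<^sub>0\<close> satisfies
  \<open>ex\<^sub>1 = x\<^sub>1 < ex\<close> and \<open>\<alpha>(x\<^sub>1) = \<alpha>(ex)\<close>, so the h-condition applies.\<close>

lemma supertropical_mult_closed: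
  "supertropical_monoid U \<Longrightarrow> x \<in> carrier U \<Longrightarrow> y \<in> carrier U \<Longrightarrow> mult U x y \<in> carrier U"
  unfolding supertropical_monoid_def by (elim conjE) meson

lemma supertropical_mult_assoc:
  "supertropical_monoid U \<Longrightarrow> x \<in> carrier U \<Longrightarrow> y \<in> carrier U \<Longrightarrow> z \<in> carrier U
    \<Longrightarrow> mult U (mult U x y) z = mult U x (mult U y z)"
  unfolding supertropical_monoid_def by (elim conjE) meson

lemma supertropical_mult_comm:
  "supertropical_monoid U \<Longrightarrow> x \<in> carrier U \<Longrightarrow> y \<in> carrier U \<Longrightarrow> mult U x y = mult U y x"
  unfolding supertropical_monoid_def by (elim conjE) meson

lemma supertropical_zero_closed: "supertropical_monoid U \<Longrightarrow> zero U \<in> carrier U"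
  unfolding supertropical_monoid_def by (elim conjE) meson

lemma supertropical_zero_mult:
  "supertropical_monoid U \<Longrightarrow> x \<in> carrier U \<Longrightarrow> mult U (zero U) x = zero U"
  unfolding supertropical_monoid_def by (elim conjE) meson

lemma supertropical_ghost_closed: "supertropical_monoid U \<Longrightarrow> ghost U \<in> carrier U"
  unfolding supertropical_monoid_def by (elim conjE) meson

lemma supertropical_ghost_idem: "supertropical_monoid U \<Longrightarrow> mult U (ghost U) (ghost U) = ghost U"
  unfolding supertropical_monoid_def by (elim conjE) meson

lemma supertropical_ghost_mult_eq_zero:
  "supertropical_monoid U \<Longrightarrow> x \<in> carrier U \<Longrightarrow> mult U (ghost U) x = zero U \<Longrightarrow> x = zero U"
  unfolding supertropical_monoid_def by (elim conjE) meson

lemma ghost_mult_in_ghosts: "x \<in> carrier U \<Longrightarrow> mult U (ghost U) x \<in> ghosts U"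
  unfolding ghosts_def by blast

lemma ghosts_subset_carrier:
  assumes "supertropical_monoid U"
  shows "ghosts U \<subseteq> carrier U"
  using supertropical_mult_closed[OF assms supertropical_ghost_closed[OF assms]]
  unfolding ghosts_def by blast

lemma ghost_mult_ghosts:
  assumes U: "supertropical_monoid U" and z: "z \<in> ghosts U"
  shows "mult U (ghost U) z = z"
proof -
  obtain u where u: "u \<in> carrier U" and z_eq: "z = mult U (ghost U) u"
    using z unfolding ghosts_def by blast
  have e: "ghost U \<in> carrier U"
    using supertropical_ghost_closed[OF U] .
  have "mult U (ghost U) (mult U (ghost U) u) = mult U (mult U (ghost U) (ghost U)) u"
    using supertropical_mult_assoc[OF U e e u] by simp
  also have "\<dots> = mult U (ghost U) u"
    using supertropical_ghost_idem[OF U] by simp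
  finally show ?thesis using z_eq by simp
qed

lemma zero_in_ghosts:
  assumes U: "supertropical_monoid U"
  shows "zero U \<in> ghosts U"
proof -
  have e: "ghost U \<in> carrier U" and zero: "zero U \<in> carrier U"
    using supertropical_ghost_closed[OF U] supertropical_zero_closed[OF U] .
  have "mult U (ghost U) (zero U) = zero U"
    using supertropical_mult_comm[OF U e zero] supertropical_zero_mult[OF U e] by simp
  then show ?thesis using ghost_mult_in_ghosts[OF zero] by simp
qed

lemma transmission_closed:
  "transmission U V \<alpha> \<Longrightarrow> x \<in> carrier U \<Longrightarrow> \<alpha> x \<in> carrier V"
  unfolding transmission_def by blast

lemma transmission_ghost_mult:
  assumes "transmission U V \<alpha>" "supertropical_monoid U" "y \<in> carrier U"
  shows "\<alpha> (mult U (ghost U) y) = mult V (ghost V) (\<alpha> y)"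
  using assms supertropical_ghost_closed[OF assms(2)] unfolding transmission_def by simp

lemma transmission_zero_of_ghost_mult_zero:
  assumes T: "transmission U V \<alpha>" and U: "supertropical_monoid U" and V: "supertropical_monoid V"
    and y: "y \<in> carrier U" and zero: "\<alpha> (mult U (ghost U) y) = zero V"
  shows "\<alpha> y = zero V"
proof (rule supertropical_ghost_mult_eq_zero[OF V transmission_closed[OF T y]])
  show "mult V (ghost V) (\<alpha> y) = zero V"
    using zero transmission_ghost_mult[OF T U y] by simp
qed

lemma covering_ghosts_to_ghosts:
  assumes "ghost_semiring_hom U V \<gamma>" "covers U \<alpha> \<gamma>" "x \<in> ghosts U"
  shows "\<alpha> x \<in> ghosts V"
  using assms unfolding ghost_semiring_hom_def covers_def by simp

lemma h_transmission_imp_Sigma0_subset_ghost_kernel: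
  assumes U: "supertropical_monoid U"
    and h: "h_transmission U V \<alpha>" and cov: "covers U \<alpha> \<gamma>"
  shows "Sigma0 U V \<gamma> \<subseteq> ghost_kernel U V \<alpha>"
proof
  fix x assume "x \<in> Sigma0 U V \<gamma>"
  then obtain x1 where x: "x \<in> carrier U" and x1: "x1 \<in> ghosts U"
    and less: "lt U x1 (mult U (ghost U) x)" and same: "\<gamma> x1 = \<gamma> (mult U (ghost U) x)"
    unfolding Sigma0_def tangibles_def by blast
  have x1_carrier: "x1 \<in> carrier U"
    using x1 ghosts_subset_carrier[OF U] by blast
  have ex1: "mult U (ghost U) x1 = x1"
    using ghost_mult_ghosts[OF U x1] .
  have "\<alpha> (mult U (ghost U) x1) = \<alpha> (mult U (ghost U) x)"
    using ex1 same cov x1 ghost_mult_in_ghosts[OF x] unfolding covers_def by simp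
  moreover have "lt U (mult U (ghost U) x1) (mult U (ghost U) x)"
    using ex1 less by simp
  ultimately have "\<alpha> x \<in> ghosts V"
    using h x1_carrier x unfolding h_transmission_def by blast
  then show "x \<in> ghost_kernel U V \<alpha>"
    using x unfolding ghost_kernel_def by blast
qed

lemma Sigma0_subset_ghost_kernel_imp_h_transmission:
  assumes U: "supertropical_monoid U" and V: "supertropical_monoid V"
    and hom: "ghost_semiring_hom U V \<gamma>"
    and T: "transmission U V \<alpha>" and cov: "covers U \<alpha> \<gamma>"
    and sub: "Sigma0 U V \<gamma> \<subseteq> ghost_kernel U V \<alpha>"
  shows "h_transmission U V \<alpha>"
  unfolding h_transmission_def
proof (intro conjI T ballI impI)
  fix x y assume x: "x \<in> carrier U" and y: "y \<in> carrier U"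
    and hyp: "lt U (mult U (ghost U) x) (mult U (ghost U) y) \<and>
      \<alpha> (mult U (ghost U) x) = \<alpha> (mult U (ghost U) y)"
  have \<alpha>_eq_\<gamma>: "\<And>z. z \<in> ghosts U \<Longrightarrow> \<alpha> z = \<gamma> z"
    using cov unfolding covers_def by blast
  consider "y \<in> ghosts U" | "\<gamma> (mult U (ghost U) y) = zero V" | "y \<in> Sigma0 U V \<gamma>"
  proof (cases "y \<in> ghosts U \<or> \<gamma> (mult U (ghost U) y) = zero V")
    case True
    then show ?thesis using that by blast
  next
    case False
    have "\<gamma> (mult U (ghost U) x) = \<gamma> (mult U (ghost U) y)"
      using hyp \<alpha>_eq_\<gamma>[OF ghost_mult_in_ghosts[OF x]] \<alpha>_eq_\<gamma>[OF ghost_mult_in_ghosts[OF y]] by simp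
    then have "y \<in> Sigma0 U V \<gamma>"
      using False hyp y ghost_mult_in_ghosts[OF x] unfolding Sigma0_def tangibles_def by blast
    then show ?thesis using that by blast
  qed
  then show "\<alpha> y \<in> ghosts V"
  proof cases
    case 1
    then show ?thesis using covering_ghosts_to_ghosts[OF hom cov] by blast
  next
    case 2
    then have "\<alpha> y = zero V"
      using transmission_zero_of_ghost_mult_zero[OF T U V y] \<alpha>_eq_\<gamma> ghost_mult_in_ghosts[OF y]
      by simp
    then show ?thesis using zero_in_ghosts[OF V] by simp
  next
    case 3
    then show ?thesis using sub unfolding ghost_kernel_def by blast
  qed
qed

theorem proposition5p8:
  fixes U :: "'a stmonoid" and V :: "'b stmonoid"
    and \<gamma> :: "'a \<Rightarrow> 'b" and \<alpha> :: "'a \<Rightarrow> 'b"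
  assumes "supertropical_monoid U"
    and "supertropical_monoid V"
    and "ghost_semiring_hom U V \<gamma>"
    and "\<gamma> ` ghosts U = ghosts V"
    and "transmission U V \<alpha>"
    and "covers U \<alpha> \<gamma>"
  shows "h_transmission U V \<alpha> \<longleftrightarrow> Sigma0 U V \<gamma> \<subseteq> ghost_kernel U V \<alpha>"
  using h_transmission_imp_Sigma0_subset_ghost_kernel[OF assms(1) _ assms(6)]
    Sigma0_subset_ghost_kernel_imp_h_transmission[OF assms(1,2,3,5,6)]
  by blast

end
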